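(* Let $\Omega$ be a finite set, $n\ge 1$, and let $P_i,Q_i$ ($i=1,\dots,n$) be strictly positive probability mass functions on $\Omega$. For each $i$ define the finite positive measure on $\mathbb R$ \[ \eta_i:=\sum_{\omega\in\Omega}\sqrt{P_i(\omega)Q_i(\omega)}\,\delta_{\frac12\log\frac{P_i(\omega)}{Q_i(\omega)}}, \] where $\delta_u$ is the Dirac mass at $u\in\mathbb R$. Then \[ \mathrm{TV}\Big(\bigotimes_{i=1}^n P_i,\bigotimes_{i=1}^n Q_i\Big)=T(\eta_1*\cdots*\eta_n), \] where for a finite positive measure $\eta$ on $\mathbb R$, $T(\eta):=\frac12\int_{\mathbb R}|e^x-e^{-x}|\,\eta(dx)$.
   Context: $*$ denotes convolution of finite positive measures on $\mathbb R$ (the pushforward of the product measure under addition). For probability measures $\mu,\nu$ on a finite set, $\mathrm{TV}(\mu,\nu)=\frac12\sum_\omega|\mu(\omega)-\nu(\omega)|$. *)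

theory Defs
  imports "HOL-Probability.Probability"
begin

definition pos_pmf_on :: "'a set \<Rightarrow> ('a \<Rightarrow> real) \<Rightarrow> bool" where
  "pos_pmf_on \<Omega> p \<longleftrightarrow> (\<forall>w\<in>\<Omega>. p w > 0) \<and> (\<Sum>w\<in>\<Omega>. p w) = 1"

definition TV :: "'a set \<Rightarrow> ('a \<Rightarrow> real) \<Rightarrow> ('a \<Rightarrow> real) \<Rightarrow> real" where
  "TV S mu nu = (1/2) * (\<Sum>w\<in>S. \<bar>mu w - nu w\<bar>)"

definition prod_pmf_fun :: "nat \<Rightarrow> (nat \<Rightarrow> 'a \<Rightarrow> real) \<Rightarrow> (nat \<Rightarrow> 'a) \<Rightarrow> real" where
  "prod_pmf_fun n P w = (\<Prod>i\<in>{1..n}. P i (w i))"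

definition dirac_sum :: "'a set \<Rightarrow> ('a \<Rightarrow> real) \<Rightarrow> ('a \<Rightarrow> real) \<Rightarrow> real measure" where
  "dirac_sum \<Omega> c x = measure_of UNIV (sets borel)
      (\<lambda>A. ennreal (\<Sum>w\<in>\<Omega>. c w * indicator A (x w)))"

definition eta :: "'a set \<Rightarrow> ('a \<Rightarrow> real) \<Rightarrow> ('a \<Rightarrow> real) \<Rightarrow> real measure" where
  "eta \<Omega> p q = dirac_sum \<Omega> (\<lambda>w. sqrt (p w * q w)) (\<lambda>w. (1/2) * ln (p w / q w))"

fun conv_upto :: "(nat \<Rightarrow> real measure) \<Rightarrow> nat \<Rightarrow> real measure" where
  "conv_upto e 0 = return borel 0"
| "conv_upto e (Suc 0) = e 1"
| "conv_upto e (Suc (Suc k)) = convolution (conv_upto e (Suc k)) (e (Suc (Suc k)))"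

definition T_fun :: "real measure \<Rightarrow> real" where
  "T_fun M = (1/2) * (\<integral>x. \<bar>exp x - exp (- x)\<bar> \<partial>M)"

end

theory Submission imports Defs begin

text \<open>Put \<open>c\<^sub>i(\<omega>) = \<surd>(P\<^sub>i(\<omega>) Q\<^sub>i(\<omega>))\<close> and \<open>x\<^sub>i(\<omega>) = \<onehalf> log (P\<^sub>i(\<omega>) / Q\<^sub>i(\<omega>))\<close>, so that
  \<open>c\<^sub>i e\<^bsup>x\<^sub>i\<^esup> = P\<^sub>i\<close> and \<open>c\<^sub>i e\<^bsup>-x\<^sub>i\<^esup> = Q\<^sub>i\<close>. A convolution of finitely supported measures is
  again finitely supported: \<open>\<eta>\<^sub>1 * \<dots> * \<eta>\<^sub>n\<close> puts mass \<open>\<Prod>\<^sub>i c\<^sub>i(\<omega>\<^sub>i)\<close> at \<open>\<Sum>\<^sub>i x\<^sub>i(\<omega>\<^sub>i)\<close> for every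
  \<open>\<omega> \<in> \<Omega>\<^sup>n\<close>. Integrating \<open>\<onehalf>|e\<^sup>x - e\<^bsup>-x\<^esup>|\<close> against it therefore gives
  \<open>\<onehalf> \<Sum>\<^sub>\<omega> |\<Prod>\<^sub>i P\<^sub>i(\<omega>\<^sub>i) - \<Prod>\<^sub>i Q\<^sub>i(\<omega>\<^sub>i)|\<close>.\<close>

text \<open>The measure \<open>\<Sum>\<^sub>w\<^sub>\<in>\<^sub>S c w \<delta>\<^bsub>x w\<^esub>\<close> as an image measure, which (unlike \<^const>\<open>dirac_sum\<close>)
  comes with the library's integration rules.\<close>
definition weighted_diracs :: "'b set \<Rightarrow> ('b \<Rightarrow> real) \<Rightarrow> ('b \<Rightarrow> real) \<Rightarrow> real measure" where
  "weighted_diracs S c x = distr (density (count_space S) (\<lambda>w. ennreal (c w))) borel x"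

lemma sets_weighted_diracs [simp]: "sets (weighted_diracs S c x) = sets borel"
  and space_weighted_diracs [simp]: "space (weighted_diracs S c x) = UNIV"
  by (simp_all add: weighted_diracs_def)

lemma nn_integral_weighted_diracs:
  assumes "finite S" "f \<in> borel_measurable borel"
  shows "(\<integral>\<^sup>+y. f y \<partial>weighted_diracs S c x) = (\<Sum>w\<in>S. ennreal (c w) * f (x w))"
  unfolding weighted_diracs_def using assms
  by (simp add: nn_integral_distr nn_integral_density nn_integral_count_space_finite)

lemma emeasure_weighted_diracs:
  assumes "finite S" "\<And>w. w \<in> S \<Longrightarrow> c w \<ge> 0" "A \<in> sets borel"
  shows "emeasure (weighted_diracs S c x) A = ennreal (\<Sum>w\<in>S. c w * indicator A (x w))"
proof -
  have "emeasure (weighted_diracs S c x) A = (\<integral>\<^sup>+y. indicator A y \<partial>weighted_diracs S c x)"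
    using assms by simp
  also have "\<dots> = (\<Sum>w\<in>S. ennreal (c w) * indicator A (x w))"
    using assms by (intro nn_integral_weighted_diracs) auto
  also have "\<dots> = (\<Sum>w\<in>S. ennreal (c w * indicator A (x w)))"
    by (intro sum.cong) (auto simp: indicator_def)
  also have "\<dots> = ennreal (\<Sum>w\<in>S. c w * indicator A (x w))"
    using assms by (intro sum_ennreal) auto
  finally show ?thesis .
qed

lemma finite_measure_weighted_diracs:
  assumes "finite S" "\<And>w. w \<in> S \<Longrightarrow> c w \<ge> 0"
  shows "finite_measure (weighted_diracs S c x)"
  by (rule finite_measureI) (simp add: emeasure_weighted_diracs assms)

lemma integral_weighted_diracs:
  assumes "finite S" "\<And>w. w \<in> S \<Longrightarrow> c w \<ge> 0" "f \<in> borel_measurable borel"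
  shows "(\<integral>y. f y \<partial>weighted_diracs S c x) = (\<Sum>w\<in>S. c w * f (x w))"
proof -
  have "(\<integral>y. f y \<partial>weighted_diracs S c x)
      = (\<integral>w. f (x w) \<partial>density (count_space S) (\<lambda>w. ennreal (c w)))"
    unfolding weighted_diracs_def using assms by (subst integral_distr) auto
  also have "\<dots> = (\<integral>w. c w *\<^sub>R f (x w) \<partial>count_space S)"
    using assms by (intro integral_density) (auto simp: AE_count_space)
  finally show ?thesis
    using assms by (simp add: lebesgue_integral_count_space_finite)
qed

lemma dirac_sum_eq_weighted_diracs:
  assumes "finite S" "\<And>w. w \<in> S \<Longrightarrow> c w \<ge> 0"
  shows "dirac_sum S c x = weighted_diracs S c x"
proof -
  have "dirac_sum S c x = measure_of UNIV (sets borel) (emeasure (weighted_diracs S c x))"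
    unfolding dirac_sum_def
  proof (rule measure_of_eq)
    fix A :: "real set" assume "A \<in> sigma_sets UNIV (sets borel)"
    then have "A \<in> sets borel" by (metis sets.sigma_sets_eq space_borel)
    then show "ennreal (\<Sum>w\<in>S. c w * indicator A (x w)) = emeasure (weighted_diracs S c x) A"
      by (simp add: emeasure_weighted_diracs assms)
  qed simp
  also have "\<dots> = weighted_diracs S c x"
    using measure_of_of_measure[of "weighted_diracs S c x"] by simp
  finally show ?thesis .
qed

lemma weighted_diracs_reindex:
  assumes "finite S" "\<And>w. w \<in> S \<Longrightarrow> c w \<ge> 0" "bij_betw h S' S"
  shows "weighted_diracs S' (\<lambda>w. c (h w)) (\<lambda>w. x (h w)) = weighted_diracs S c x"
proof (rule measure_eqI)
  have "finite S'" "\<And>w. w \<in> S' \<Longrightarrow> c (h w) \<ge> 0"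
    using assms bij_betw_finite bij_betwE by blast+
  then show "emeasure (weighted_diracs S' (\<lambda>w. c (h w)) (\<lambda>w. x (h w))) A
      = emeasure (weighted_diracs S c x) A"
    if "A \<in> sets (weighted_diracs S' (\<lambda>w. c (h w)) (\<lambda>w. x (h w)))" for A
    using that assms sum.reindex_bij_betw[OF assms(3), of "\<lambda>w. c w * indicator A (x w)"]
    by (simp add: emeasure_weighted_diracs)
qed simp

lemma convolution_weighted_diracs:
  assumes "finite S" "\<And>w. w \<in> S \<Longrightarrow> c w \<ge> 0" "finite S'" "\<And>w. w \<in> S' \<Longrightarrow> c' w \<ge> 0"
  shows "convolution (weighted_diracs S c x) (weighted_diracs S' c' x')
       = weighted_diracs (S \<times> S') (\<lambda>(a, b). c a * c' b) (\<lambda>(a, b). x a + x' b)"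
proof (rule measure_eqI)
  fix A :: "real set" assume "A \<in> sets (convolution (weighted_diracs S c x) (weighted_diracs S' c' x'))"
  then have [measurable]: "A \<in> sets borel" by simp
  have "emeasure (convolution (weighted_diracs S c x) (weighted_diracs S' c' x')) A
      = (\<integral>\<^sup>+y. \<integral>\<^sup>+z. indicator A (y + z) \<partial>weighted_diracs S' c' x' \<partial>weighted_diracs S c x)"
    using assms by (intro convolution_emeasure') (auto intro: finite_measure_weighted_diracs)
  also have "\<dots> = (\<integral>\<^sup>+y. (\<Sum>b\<in>S'. ennreal (c' b) * indicator A (y + x' b)) \<partial>weighted_diracs S c x)"
    using assms by (intro nn_integral_cong nn_integral_weighted_diracs) auto
  also have "\<dots> = (\<Sum>a\<in>S. ennreal (c a) * (\<Sum>b\<in>S'. ennreal (c' b) * indicator A (x a + x' b)))"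
    by (intro nn_integral_weighted_diracs assms(1)) measurable
  also have "\<dots> = (\<Sum>a\<in>S. \<Sum>b\<in>S'. ennreal (c a * c' b) * indicator A (x a + x' b))"
    unfolding sum_distrib_left using assms by (intro sum.cong refl) (simp add: ennreal_mult mult.assoc)
  also have "\<dots> = (\<Sum>(a, b)\<in>S \<times> S'. ennreal (c a * c' b) * indicator A (x a + x' b))"
    by (rule sum.cartesian_product)
  also have "\<dots> = (\<integral>\<^sup>+y. indicator A y
      \<partial>weighted_diracs (S \<times> S') (\<lambda>(a, b). c a * c' b) (\<lambda>(a, b). x a + x' b))"
    using assms by (subst nn_integral_weighted_diracs) (simp_all add: case_prod_unfold)
  finally show "emeasure (convolution (weighted_diracs S c x) (weighted_diracs S' c' x')) A
      = emeasure (weighted_diracs (S \<times> S') (\<lambda>(a, b). c a * c' b) (\<lambda>(a, b). x a + x' b)) A"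
    by simp
qed simp

lemma bij_betw_fun_upd_PiE:
  assumes "j \<notin> I"
  shows "bij_betw (\<lambda>(g, y). g(j := y)) (PiE I S \<times> S j) (PiE (insert j I) S)"
proof -
  have "bij_betw (\<lambda>(y, g). g(j := y)) (S j \<times> PiE I S) (PiE (insert j I) S)"
    using assms by (simp add: bij_betw_def inj_combinator PiE_insert_eq)
  moreover have "bij_betw prod.swap (PiE I S \<times> S j) (S j \<times> PiE I S)"
    by (simp add: bij_betw_def product_swap)
  ultimately show ?thesis
    by (auto dest: bij_betw_trans simp: comp_def case_prod_unfold)
qed

lemma bij_betw_fun_upd_PiE_singleton:
  "bij_betw (\<lambda>y. (\<lambda>_. undefined)(j := y)) (S j) (PiE {j} S)"
  by (rule bij_betw_byWitness[where f'="\<lambda>w. w j"])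
    (auto simp: PiE_iff extensional_def fun_eq_iff split: if_splits)

lemma conv_upto_weighted_diracs:
  assumes "\<And>i. i \<in> {1..Suc k} \<Longrightarrow> finite (S i)"
    and "\<And>i. i \<in> {1..Suc k} \<Longrightarrow> e i = weighted_diracs (S i) (c i) (x i)"
    and "\<And>i w. i \<in> {1..Suc k} \<Longrightarrow> w \<in> S i \<Longrightarrow> c i w \<ge> 0"
  shows "conv_upto e (Suc k) = weighted_diracs (PiE {1..Suc k} S)
           (\<lambda>w. \<Prod>i\<in>{1..Suc k}. c i (w i)) (\<lambda>w. \<Sum>i\<in>{1..Suc k}. x i (w i))"
  using assms
proof (induction k)
  case 0
  have "finite (PiE {1} S)"
    using 0 by (intro finite_PiE) auto
  then have "weighted_diracs (S 1) (c 1) (x 1)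
      = weighted_diracs (PiE {1} S) (\<lambda>w. c 1 (w 1)) (\<lambda>w. x 1 (w 1))"
    using 0 weighted_diracs_reindex[where S="PiE {1} S" and c="\<lambda>w. c 1 (w 1)"
        and x="\<lambda>w. x 1 (w 1)", OF _ _ bij_betw_fun_upd_PiE_singleton]
    by (simp add: PiE_iff)
  with 0 show ?case by simp
next
  case (Suc k)
  let ?I = "{1..Suc k}" and ?j = "Suc (Suc k)"
  define C where "C g = (\<Prod>i\<in>?I. c i (g i))" for g
  define X where "X g = (\<Sum>i\<in>?I. x i (g i))" for g
  have fin: "finite (PiE ?I S)"
    using Suc.prems(1) by (intro finite_PiE) auto
  have C_nonneg: "C g \<ge> 0" if "g \<in> PiE ?I S" for g
    unfolding C_def using that Suc.prems(3) by (intro prod_nonneg) (auto simp: PiE_iff)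
  have "conv_upto e ?j = convolution (weighted_diracs (PiE ?I S) C X)
      (weighted_diracs (S ?j) (c ?j) (x ?j))"
    using Suc unfolding C_def X_def by simp
  also have "\<dots> = weighted_diracs (PiE ?I S \<times> S ?j)
      (\<lambda>(g, y). C g * c ?j y) (\<lambda>(g, y). X g + x ?j y)"
    using Suc.prems fin C_nonneg by (intro convolution_weighted_diracs) auto
  also have "\<dots> = weighted_diracs (PiE (insert ?j ?I) S)
      (\<lambda>w. \<Prod>i\<in>insert ?j ?I. c i (w i)) (\<lambda>w. \<Sum>i\<in>insert ?j ?I. x i (w i))"
  proof -
    have "(\<lambda>(g, y). C g * c ?j y)
        = (\<lambda>p. \<Prod>i\<in>insert ?j ?I. c i ((case p of (g, y) \<Rightarrow> g(?j := y)) i))"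
      and "(\<lambda>(g, y). X g + x ?j y)
        = (\<lambda>p. \<Sum>i\<in>insert ?j ?I. x i ((case p of (g, y) \<Rightarrow> g(?j := y)) i))"
      unfolding C_def X_def by (auto intro!: prod.cong sum.cong)
    moreover have "finite (PiE (insert ?j ?I) S)"
      using Suc.prems(1) by (intro finite_PiE) auto
    moreover have "(\<Prod>i\<in>insert ?j ?I. c i (w i)) \<ge> 0" if "w \<in> PiE (insert ?j ?I) S" for w
      using that Suc.prems(3) by (intro prod_nonneg) (auto simp: PiE_iff)
    ultimately show ?thesis
      using weighted_diracs_reindex[where c="\<lambda>w. \<Prod>i\<in>insert ?j ?I. c i (w i)"
          and x="\<lambda>w. \<Sum>i\<in>insert ?j ?I. x i (w i)", OF _ _ bij_betw_fun_upd_PiE[of ?j ?I S]]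
      by simp
  qed
  finally show ?case
    by (simp add: atLeastAtMostSuc_conv)
qed

lemma T_fun_weighted_diracs:
  assumes "finite S" "\<And>w. w \<in> S \<Longrightarrow> c w \<ge> 0"
  shows "T_fun (weighted_diracs S c x) = (1/2) * (\<Sum>w\<in>S. \<bar>c w * exp (x w) - c w * exp (- x w)\<bar>)"
proof -
  have "c w * \<bar>exp (x w) - exp (- x w)\<bar> = \<bar>c w * exp (x w) - c w * exp (- x w)\<bar>" if "w \<in> S" for w
    using assms(2)[OF that] by (metis abs_mult abs_of_nonneg right_diff_distrib)
  then show ?thesis
    unfolding T_fun_def using assms by (simp add: integral_weighted_diracs)
qed

lemma sqrt_mult_exp_half_ln_div:
  fixes p q :: real
  assumes "p > 0" "q > 0"
  shows "sqrt (p * q) * exp ((1/2) * ln (p / q)) = p"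
proof -
  have "exp ((1/2) * ln (p / q)) = sqrt (p / q)"
    using assms by (simp add: powr_half_sqrt[symmetric] powr_def)
  moreover have "sqrt (p * q) * sqrt (p / q) = sqrt (p * p)"
    using assms by (simp add: real_sqrt_mult[symmetric])
  ultimately show ?thesis
    using assms by simp
qed

lemma prod_sqrt_mult_exp_sum_half_ln_div:
  fixes p q :: "'b \<Rightarrow> real"
  assumes "finite I" "\<And>i. i \<in> I \<Longrightarrow> p i > 0" "\<And>i. i \<in> I \<Longrightarrow> q i > 0"
  shows "(\<Prod>i\<in>I. sqrt (p i * q i)) * exp (\<Sum>i\<in>I. (1/2) * ln (p i / q i)) = (\<Prod>i\<in>I. p i)"
    and "(\<Prod>i\<in>I. sqrt (p i * q i)) * exp (- (\<Sum>i\<in>I. (1/2) * ln (p i / q i))) = (\<Prod>i\<in>I. q i)"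
proof -
  have p_part: "(\<Prod>i\<in>I. sqrt (p i * q i)) * exp (\<Sum>i\<in>I. (1/2) * ln (p i / q i)) = (\<Prod>i\<in>I. p i)"
    if "\<And>i. i \<in> I \<Longrightarrow> p i > 0" "\<And>i. i \<in> I \<Longrightarrow> q i > 0" for p q :: "'b \<Rightarrow> real"
  proof -
    have "(\<Prod>i\<in>I. sqrt (p i * q i)) * exp (\<Sum>i\<in>I. (1/2) * ln (p i / q i))
        = (\<Prod>i\<in>I. sqrt (p i * q i) * exp ((1/2) * ln (p i / q i)))"
      using assms(1) by (simp add: exp_sum prod.distrib)
    also have "\<dots> = (\<Prod>i\<in>I. p i)"
      using that by (intro prod.cong refl sqrt_mult_exp_half_ln_div) auto
    finally show ?thesis .
  qed
  then show "(\<Prod>i\<in>I. sqrt (p i * q i)) * exp (\<Sum>i\<in>I. (1/2) * ln (p i / q i)) = (\<Prod>i\<in>I. p i)"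
    using assms(2,3) by blast
  have "- (\<Sum>i\<in>I. (1/2) * ln (p i / q i)) = (\<Sum>i\<in>I. (1/2) * ln (q i / p i))"
    unfolding sum_negf[symmetric] using assms by (intro sum.cong refl) (simp add: ln_div)
  then show "(\<Prod>i\<in>I. sqrt (p i * q i)) * exp (- (\<Sum>i\<in>I. (1/2) * ln (p i / q i))) = (\<Prod>i\<in>I. q i)"
    using p_part[of q p] assms by (simp add: mult.commute[of "p _"])
qed

theorem theorem1:
  fixes \<Omega> :: "'a set" and n :: nat and P Q :: "nat \<Rightarrow> 'a \<Rightarrow> real"
  assumes "finite \<Omega>" and "n \<ge> 1"
    and "\<And>i. i \<in> {1..n} \<Longrightarrow> pos_pmf_on \<Omega> (P i)"
    and "\<And>i. i \<in> {1..n} \<Longrightarrow> pos_pmf_on \<Omega> (Q i)"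
  shows "TV (PiE {1..n} (\<lambda>_. \<Omega>)) (prod_pmf_fun n P) (prod_pmf_fun n Q)
         = T_fun (conv_upto (\<lambda>i. eta \<Omega> (P i) (Q i)) n)"
proof -
  obtain k where k: "n = Suc k"
    using assms(2) by (cases n) auto
  have pos: "P i w > 0" "Q i w > 0" if "i \<in> {1..n}" "w \<in> \<Omega>" for i w
    using assms(3,4) that by (auto simp: pos_pmf_on_def)
  let ?\<Omega>n = "PiE {1..n} (\<lambda>_. \<Omega>)"
  define C where "C w = (\<Prod>i\<in>{1..n}. sqrt (P i (w i) * Q i (w i)))" for w
  define X where "X w = (\<Sum>i\<in>{1..n}. (1/2) * ln (P i (w i) / Q i (w i)))" for w
  have "conv_upto (\<lambda>i. eta \<Omega> (P i) (Q i)) n = weighted_diracs ?\<Omega>n C X"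
    unfolding k C_def X_def eta_def using assms(1) pos
    by (intro conv_upto_weighted_diracs dirac_sum_eq_weighted_diracs)
      (auto simp: k less_imp_le)
  moreover have "finite ?\<Omega>n"
    using assms(1) by (simp add: finite_PiE)
  moreover have "C w \<ge> 0" if "w \<in> ?\<Omega>n" for w
    unfolding C_def using that pos by (auto simp: PiE_iff less_imp_le intro!: prod_nonneg)
  moreover have "C w * exp (X w) = prod_pmf_fun n P w" "C w * exp (- X w) = prod_pmf_fun n Q w"
    if "w \<in> ?\<Omega>n" for w
    unfolding C_def X_def prod_pmf_fun_def using that pos
    by (intro prod_sqrt_mult_exp_sum_half_ln_div; force simp: PiE_iff)+
  ultimately show ?thesis
    unfolding TV_def by (simp add: T_fun_weighted_diracs)
qed

end
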